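(* Let $uv\in E(G)$. If $\phi$ is a cheapest $(T_1,T_2)$-extension of $G - {uv}$ and $u$ and $v$ are in the same good component of $\phi$, then $uv$ is irrelevant.
   Context: $(G,k,t,T_1,T_2)$ is an instance of the Cheap Coloring Extension problem: $G$ is a bipartite graph, $T_1,T_2$ are disjoint vertex sets with $|T_1|+|T_2|\le t$, and one asks for a $(T_1,T_2)$-extension of cost at most $k$. A 2-coloring of $G$ is any function $\phi: V(G)\to\{1,2\}$; it is a $(T_1,T_2)$-extension if it colors $T_1$ with 1 and $T_2$ with 2. Its cost is $\sum_X(|X|-1)$ over the monochromatic components $X$ (connected components of the subgraphs induced by each color class). A $(T_1,T_2)$-extension is cheapest if no $(T_1,T_2)$-extension has strictly lower cost. An edge $uv$ is good w.r.t. $\phi$ if $\phi(u)\neq\phi(v)$ and bad otherwise; a good component of $\phi$ is the vertex set of a connected component of the graph $(V(G),E')$ where $E'$ is the set of good edges. An edge $e$ is irrelevant if $G$ has a $(T_1,T_2)$-extension of cost at most $k$ if and only if $G-e$ does. *)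

theory Defs
  imports Main
begin

definition simple_graph :: "'a set \<Rightarrow> 'a set set \<Rightarrow> bool" where
  "simple_graph V E \<longleftrightarrow> finite V \<and>
     (\<forall>e\<in>E. \<exists>x y. e = {x, y} \<and> x \<noteq> y \<and> x \<in> V \<and> y \<in> V)"

definition bipartite :: "'a set \<Rightarrow> 'a set set \<Rightarrow> bool" where
  "bipartite V E \<longleftrightarrow> (\<exists>A. A \<subseteq> V \<and>
     (\<forall>e\<in>E. \<exists>x y. e = {x, y} \<and> (x \<in> A \<longleftrightarrow> y \<notin> A)))"

definition reach :: "'a set \<Rightarrow> 'a set set \<Rightarrow> 'a \<Rightarrow> 'a \<Rightarrow> bool" where
  "reach V E x y \<longleftrightarrow>
     (x, y) \<in> {(a, b). a \<in> V \<and> b \<in> V \<and> {a, b} \<in> E}\<^sup>*"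

definition components :: "'a set \<Rightarrow> 'a set set \<Rightarrow> 'a set set" where
  "components V E = {{y \<in> V. reach V E x y} | x. x \<in> V}"

definition two_coloring :: "'a set \<Rightarrow> ('a \<Rightarrow> nat) \<Rightarrow> bool" where
  "two_coloring V \<phi> \<longleftrightarrow> (\<forall>x\<in>V. \<phi> x \<in> {1, 2})"

definition extension :: "'a set \<Rightarrow> 'a set \<Rightarrow> 'a set \<Rightarrow> ('a \<Rightarrow> nat) \<Rightarrow> bool" where
  "extension V T1 T2 \<phi> \<longleftrightarrow> two_coloring V \<phi> \<and>
     (\<forall>x\<in>T1. \<phi> x = 1) \<and> (\<forall>x\<in>T2. \<phi> x = 2)"

definition bad_edges :: "'a set set \<Rightarrow> ('a \<Rightarrow> nat) \<Rightarrow> 'a set set" where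
  "bad_edges E \<phi> = {e \<in> E. \<exists>x y. e = {x, y} \<and> \<phi> x = \<phi> y}"

definition good_edges :: "'a set set \<Rightarrow> ('a \<Rightarrow> nat) \<Rightarrow> 'a set set" where
  "good_edges E \<phi> = {e \<in> E. \<exists>x y. e = {x, y} \<and> \<phi> x \<noteq> \<phi> y}"

(* monochromatic components: components of the subgraphs induced by the color
   classes, i.e. the components of (V, bad edges) *)
definition mono_components :: "'a set \<Rightarrow> 'a set set \<Rightarrow> ('a \<Rightarrow> nat) \<Rightarrow> 'a set set" where
  "mono_components V E \<phi> = components V (bad_edges E \<phi>)"

definition good_components :: "'a set \<Rightarrow> 'a set set \<Rightarrow> ('a \<Rightarrow> nat) \<Rightarrow> 'a set set" where
  "good_components V E \<phi> = components V (good_edges E \<phi>)"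

definition cost :: "'a set \<Rightarrow> 'a set set \<Rightarrow> ('a \<Rightarrow> nat) \<Rightarrow> nat" where
  "cost V E \<phi> = (\<Sum>X\<in>mono_components V E \<phi>. card X - 1)"

definition cheapest_extension ::
  "'a set \<Rightarrow> 'a set set \<Rightarrow> 'a set \<Rightarrow> 'a set \<Rightarrow> ('a \<Rightarrow> nat) \<Rightarrow> bool" where
  "cheapest_extension V E T1 T2 \<phi> \<longleftrightarrow> extension V T1 T2 \<phi> \<and>
     (\<forall>\<psi>. extension V T1 T2 \<psi> \<longrightarrow> cost V E \<phi> \<le> cost V E \<psi>)"

definition has_cheap_extension ::
  "'a set \<Rightarrow> 'a set set \<Rightarrow> 'a set \<Rightarrow> 'a set \<Rightarrow> nat \<Rightarrow> bool" where
  "has_cheap_extension V E T1 T2 k \<longleftrightarrow> (\<exists>\<phi>. extension V T1 T2 \<phi> \<and> cost V E \<phi> \<le> k)"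

definition irrelevant ::
  "'a set \<Rightarrow> 'a set set \<Rightarrow> 'a set \<Rightarrow> 'a set \<Rightarrow> nat \<Rightarrow> 'a set \<Rightarrow> bool" where
  "irrelevant V E T1 T2 k e \<longleftrightarrow>
     (has_cheap_extension V E T1 T2 k \<longleftrightarrow> has_cheap_extension V (E - {e}) T1 T2 k)"

end

theory Submission
  imports Defs
begin

text \<open>In a bipartite graph, colours alternate exactly as sides do along a path of good
  edges, so two adjacent vertices joined by such a path get different colours. Hence the
  edge \<open>uv\<close> is good for the cheapest extension \<open>\<phi>\<close> of \<open>G - uv\<close>, and adding it back does not
  change the cost of \<open>\<phi>\<close>. Since deleting an edge never increases the cost of a colouring
  (the cost is \<open>|V|\<close> minus the number of monochromatic components), both graphs then have
  the same minimum cost.\<close>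

definition edge_rel :: "'a set \<Rightarrow> 'a set set \<Rightarrow> ('a \<times> 'a) set" where
  "edge_rel V F = {(a, b). a \<in> V \<and> b \<in> V \<and> {a, b} \<in> F}"

lemma reach_iff_rtrancl_edge_rel: "reach V F x y \<longleftrightarrow> (x, y) \<in> (edge_rel V F)\<^sup>*"
  by (simp add: reach_def edge_rel_def)

lemma reach_sym: "reach V F x y \<Longrightarrow> reach V F y x"
proof -
  have "(edge_rel V F)\<inverse> = edge_rel V F"
    by (auto simp: edge_rel_def insert_commute)
  then show "reach V F x y \<Longrightarrow> reach V F y x"
    by (metis reach_iff_rtrancl_edge_rel rtrancl_converseI)
qed

lemma reach_trans: "reach V F x y \<Longrightarrow> reach V F y z \<Longrightarrow> reach V F x z"
  by (simp add: reach_iff_rtrancl_edge_rel)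

lemma reach_mono: "F1 \<subseteq> F2 \<Longrightarrow> reach V F1 x y \<Longrightarrow> reach V F2 x y"
  unfolding reach_iff_rtrancl_edge_rel
  by (rule rtrancl_mono[THEN subsetD, rotated]) (auto simp: edge_rel_def)

definition component_of :: "'a set \<Rightarrow> 'a set set \<Rightarrow> 'a \<Rightarrow> 'a set" where
  "component_of V F x = {y \<in> V. reach V F x y}"

lemma components_eq_image: "components V F = component_of V F ` V"
  by (auto simp: components_def component_of_def)

lemma component_of_eq: "reach V F x y \<Longrightarrow> component_of V F x = component_of V F y"
  unfolding component_of_def by (meson reach_sym reach_trans)

lemma component_of_member_eq:
  "y \<in> component_of V F x \<Longrightarrow> component_of V F y = component_of V F x"
proof -
  assume "y \<in> component_of V F x"
  then have "reach V F x y" by (simp add: component_of_def)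
  then show ?thesis by (rule component_of_eq[symmetric])
qed

lemma in_component_of_self: "x \<in> V \<Longrightarrow> x \<in> component_of V F x"
  by (simp add: component_of_def reach_def)

lemma sum_card_components:
  assumes "finite V"
  shows "(\<Sum>X\<in>components V F. card X - 1) = card V - card (components V F)"
proof -
  let ?C = "components V F"
  have sub: "X \<subseteq> V" if "X \<in> ?C" for X
    using that by (auto simp: components_eq_image component_of_def)
  then have fin: "finite X" if "X \<in> ?C" for X
    using that assms finite_subset by blast
  have nonempty: "1 \<le> card X" if "X \<in> ?C" for X
  proof -
    obtain x where "x \<in> V" "X = component_of V F x"
      using \<open>X \<in> ?C\<close> by (auto simp: components_eq_image)
    then have "x \<in> X" by (simp add: in_component_of_self)
    then show ?thesis using fin[OF that] by (auto simp: Suc_le_eq card_gt_0_iff)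
  qed
  have "\<Union>?C = V"
  proof
    show "V \<subseteq> \<Union>?C"
      using in_component_of_self by (fastforce simp: components_eq_image)
  qed (use sub in blast)
  moreover have "pairwise disjnt ?C"
  proof (rule pairwiseI)
    fix X Y assume "X \<in> ?C" "Y \<in> ?C" "X \<noteq> Y"
    then obtain a b where X: "X = component_of V F a" and Y: "Y = component_of V F b"
      by (auto simp: components_eq_image)
    show "disjnt X Y"
    proof (rule ccontr)
      assume "\<not> disjnt X Y"
      then obtain z where "z \<in> X" "z \<in> Y" by (auto simp: disjnt_def)
      have "component_of V F z = X"
        using \<open>z \<in> X\<close> unfolding X by (rule component_of_member_eq)
      moreover have "component_of V F z = Y"
        using \<open>z \<in> Y\<close> unfolding Y by (rule component_of_member_eq)
      ultimately show False using \<open>X \<noteq> Y\<close> by simp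
    qed
  qed
  ultimately have "(\<Sum>X\<in>?C. card X) = card V"
    using card_Union_disjoint[of ?C] fin by simp
  moreover have "(\<Sum>X\<in>?C. card X - 1) = (\<Sum>X\<in>?C. card X) - (\<Sum>X\<in>?C. 1)"
    using nonempty by (rule sum_subtractf_nat)
  ultimately show ?thesis by simp
qed

lemma card_components_antimono:
  assumes "finite V" "F1 \<subseteq> F2"
  shows "card (components V F2) \<le> card (components V F1)"
proof -
  have "\<Union>(component_of V F2 ` component_of V F1 x) = component_of V F2 x" if "x \<in> V" for x
  proof -
    have same: "component_of V F2 y = component_of V F2 x" if "y \<in> component_of V F1 x" for y
    proof -
      have "reach V F1 x y"
        using that by (simp add: component_of_def)
      then have "reach V F2 x y"
        using assms(2) by (rule reach_mono[rotated])
      then show ?thesis by (rule component_of_eq[symmetric])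
    qed
    have "x \<in> component_of V F1 x"
      using \<open>x \<in> V\<close> by (rule in_component_of_self)
    then have "component_of V F2 ` component_of V F1 x = {component_of V F2 x}"
      by (subst image_cong[OF refl same]) (simp_all add: image_constant)
    then show ?thesis by simp
  qed
  then have "components V F2 = (\<lambda>X. \<Union>(component_of V F2 ` X)) ` components V F1"
    unfolding components_eq_image image_image by (rule image_cong[OF refl, symmetric])
  then show ?thesis
    using assms(1) by (simp add: card_image_le components_eq_image)
qed

lemma cost_remove_edge_le:
  assumes "finite V"
  shows "cost V (E - {e}) \<psi> \<le> cost V E \<psi>"
proof -
  have "bad_edges (E - {e}) \<psi> \<subseteq> bad_edges E \<psi>"
    by (auto simp: bad_edges_def)
  then show ?thesis
    unfolding cost_def mono_components_def sum_card_components[OF assms]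
    by (intro diff_le_mono2 card_components_antimono[OF assms])
qed

lemma cost_remove_good_edge:
  assumes "\<phi> u \<noteq> \<phi> v"
  shows "cost V (E - {{u, v}}) \<phi> = cost V E \<phi>"
proof -
  have "bad_edges (E - {{u, v}}) \<phi> = bad_edges E \<phi>"
    using assms by (auto simp: bad_edges_def doubleton_eq_iff)
  then show ?thesis by (simp add: cost_def mono_components_def)
qed

lemma bipartite_sides:
  assumes "bipartite V E"
  obtains A where "\<And>a b. {a, b} \<in> E \<Longrightarrow> a \<in> A \<longleftrightarrow> b \<notin> A"
proof -
  obtain A where "\<forall>e\<in>E. \<exists>x y. e = {x, y} \<and> (x \<in> A \<longleftrightarrow> y \<notin> A)"
    using assms by (auto simp: bipartite_def)
  then have "a \<in> A \<longleftrightarrow> b \<notin> A" if "{a, b} \<in> E" for a b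
    using that by (fastforce simp: doubleton_eq_iff)
  then show thesis by (rule that)
qed

lemma good_path_colours_follow_sides:
  assumes sides: "\<And>a b. {a, b} \<in> E \<Longrightarrow> a \<in> A \<longleftrightarrow> b \<notin> A"
    and "two_coloring V \<phi>" and "F \<subseteq> E" and "x \<in> V"
    and "reach V (good_edges F \<phi>) x y"
  shows "(x \<in> A \<longleftrightarrow> y \<in> A) \<longleftrightarrow> \<phi> x = \<phi> y"
  using assms(5) unfolding reach_iff_rtrancl_edge_rel
proof (induction rule: rtrancl_induct)
  case base
  then show ?case by simp
next
  case (step a b)
  then have "a \<in> V" "b \<in> V" "\<phi> a \<noteq> \<phi> b" "{a, b} \<in> E"
    using \<open>F \<subseteq> E\<close> by (auto simp: edge_rel_def good_edges_def doubleton_eq_iff)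
  moreover from this have "\<phi> a \<in> {1, 2}" "\<phi> b \<in> {1, 2}" "\<phi> x \<in> {1, 2}"
    using \<open>two_coloring V \<phi>\<close> \<open>x \<in> V\<close> by (auto simp: two_coloring_def)
  ultimately show ?case
    using step.IH sides[of a b] by auto
qed

lemma edge_in_good_component_is_good:
  assumes "bipartite V E" and "two_coloring V \<phi>" and "F \<subseteq> E" and "{u, v} \<in> E"
    and "X \<in> good_components V F \<phi>" "u \<in> X" "v \<in> X"
  shows "\<phi> u \<noteq> \<phi> v"
proof -
  obtain A where sides: "\<And>a b. {a, b} \<in> E \<Longrightarrow> a \<in> A \<longleftrightarrow> b \<notin> A"
    using bipartite_sides[OF assms(1)] by blast
  obtain x where "x \<in> V" "reach V (good_edges F \<phi>) x u" "reach V (good_edges F \<phi>) x v"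
    using assms(5-7) by (auto simp: good_components_def components_eq_image component_of_def)
  then have "(x \<in> A \<longleftrightarrow> u \<in> A) \<longleftrightarrow> \<phi> x = \<phi> u" "(x \<in> A \<longleftrightarrow> v \<in> A) \<longleftrightarrow> \<phi> x = \<phi> v"
    using good_path_colours_follow_sides[OF sides assms(2,3)] by blast+
  moreover have "\<phi> x \<in> {1, 2}" "\<phi> u \<in> {1, 2}" "\<phi> v \<in> {1, 2}"
    using \<open>two_coloring V \<phi>\<close> \<open>x \<in> V\<close> assms(5-7)
    by (auto simp: two_coloring_def good_components_def components_eq_image component_of_def)
  ultimately show ?thesis
    using sides[OF assms(4)] by auto
qed

lemma irrelevant_if_cheapest_cost_preserved:
  assumes "finite V"
    and "cheapest_extension V (E - {e}) T1 T2 \<phi>"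
    and "cost V (E - {e}) \<phi> = cost V E \<phi>"
  shows "irrelevant V E T1 T2 k e"
  unfolding irrelevant_def has_cheap_extension_def
proof
  assume "\<exists>\<psi>. extension V T1 T2 \<psi> \<and> cost V E \<psi> \<le> k"
  then show "\<exists>\<psi>. extension V T1 T2 \<psi> \<and> cost V (E - {e}) \<psi> \<le> k"
    using cost_remove_edge_le[OF assms(1)] le_trans by blast
next
  assume "\<exists>\<psi>. extension V T1 T2 \<psi> \<and> cost V (E - {e}) \<psi> \<le> k"
  then have "cost V E \<phi> \<le> k"
    using assms(2,3) by (metis cheapest_extension_def le_trans)
  then show "\<exists>\<psi>. extension V T1 T2 \<psi> \<and> cost V E \<psi> \<le> k"
    using assms(2) cheapest_extension_def by blast
qed

theorem mainTheorem6:
  fixes V :: "'a set" and E :: "'a set set" and T1 T2 :: "'a set"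
    and k t :: nat and u v :: 'a and \<phi> :: "'a \<Rightarrow> nat"
  assumes "simple_graph V E" and "bipartite V E"
    and "T1 \<subseteq> V" and "T2 \<subseteq> V" and "T1 \<inter> T2 = {}"
    and "card T1 + card T2 \<le> t"
    and "{u, v} \<in> E"
    and "cheapest_extension V (E - {{u, v}}) T1 T2 \<phi>"
    and "\<exists>X\<in>good_components V (E - {{u, v}}) \<phi>. u \<in> X \<and> v \<in> X"
  shows "irrelevant V E T1 T2 k {u, v}"
proof -
  have "finite V"
    using assms(1) by (simp add: simple_graph_def)
  have "two_coloring V \<phi>"
    using assms(8) by (simp add: cheapest_extension_def extension_def)
  obtain X where "X \<in> good_components V (E - {{u, v}}) \<phi>" "u \<in> X" "v \<in> X"
    using assms(9) by blast
  with assms(2,7) \<open>two_coloring V \<phi>\<close> have "\<phi> u \<noteq> \<phi> v"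
    by (intro edge_in_good_component_is_good) auto
  then have "cost V (E - {{u, v}}) \<phi> = cost V E \<phi>"
    by (rule cost_remove_good_edge)
  with \<open>finite V\<close> assms(8) show ?thesis
    by (rule irrelevant_if_cheapest_cost_preserved)
qed

end
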